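(* There exists a directed set $\mathcal A$, which is not a cardinal number (with its usual ordinal ordering), with $\operatorname{card}(\mathcal A)=\operatorname{cov}(\mathcal N)$, such that each of the families $\mathcal{NM}_{\mathcal A}$, $\mathcal{NF}_{\mathcal A}$ and $\mathcal{ND}_{\mathcal A}$ is positively $2^{\mathfrak c}$-coneable in the vector space $\left(\mathbb R^{[0,1]}\right)^{\mathcal A}$.
   Context: A directed set is a nonempty set $\mathcal A$ with a reflexive transitive relation $\le$ such that every two elements have an upper bound. A net $(x_A)_{A\in\mathcal A}$ in a topological space converges to $x$ if for every neighbourhood $U$ of $x$ there is $A_0$ with $x_A\in U$ for all $A\ge A_0$. For a bounded net of reals, $\liminf_{A\in\mathcal A}x_A$ is the infimum of the set of its cluster points ($x$ is a cluster point if for every neighbourhood $U$ of $x$ and every $A$ there is $A'\ge A$ with $x_{A'}\in U$). $\left(\mathbb R^{[0,1]}\right)^{\mathcal A}$ is the set of nets $(f_A)_{A\in\mathcal A}$ of functions $[0,1]\to\mathbb R$, a commutative real algebra under indexwise addition, indexwise pointwise multiplication, and scalar multiplication. $\lambda$ is Lebesgue measure, $\mathcal N$ the family of Lebesgue null subsets of $[0,1]$, $\operatorname{cov}(\mathcal N)$ the least cardinality of a subfamily of $\mathcal N$ covering $[0,1]$; $\mathfrak c=2^{\aleph_0}$. $\mathcal{NM}_{\mathcal A}$: nets of Lebesgue measurable $f_A:[0,1]\to\mathbb R$ such that (1) $A\le B$ implies $0\le f_A\le f_B$ a.e., (2) $(f_A)$ converges pointwise a.e. to some integrable $f$, (3)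 $\lim_{A}\int_{[0,1]}f_A\,d\lambda\ne\int_{[0,1]}f\,d\lambda$ (the net of integrals does not converge to $\int f$). $\mathcal{NF}_{\mathcal A}$: nets of Lebesgue measurable $f_A\ge0$ a.e. on $[0,1]$ such that $x\mapsto\liminf_{A}f_A(x)$ is integrable and $\int_{[0,1]}\liminf_A f_A\,d\lambda>\liminf_A\int_{[0,1]}f_A\,d\lambda$. $\mathcal{ND}_{\mathcal A}$: nets of Lebesgue measurable $f_A:[0,1]\to\mathbb R$ such that (1) there is an integrable $g$ with $|f_A|\le g$ a.e. for all $A$, (2) $f_A(x)\to f(x)$ a.e. for some integrable $f$, (3) $\int_{[0,1]}|f_A-f|\,d\lambda$ does not converge to $0$. A subset $S$ of a real vector space is positively $\kappa$-coneable if there is a linearly independent set $B\subset S$ with $\operatorname{card}(B)=\kappa$ such that every finite combination $\sum_{i=1}^n a_ix_i$ with $a_i>0$ and $x_i\in B$ lies in $S$. *)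

theory Defs
  imports "HOL-Analysis.Analysis"
begin

definition directed_set :: "'a set \<Rightarrow> 'a rel \<Rightarrow> bool" where
  "directed_set A r \<longleftrightarrow> A \<noteq> {} \<and> r \<subseteq> A \<times> A \<and> refl_on A r \<and> trans r \<and>
     (\<forall>a\<in>A. \<forall>b\<in>A. \<exists>c\<in>A. (a, c) \<in> r \<and> (b, c) \<in> r)"

definition net_tendsto :: "'a set \<Rightarrow> 'a rel \<Rightarrow> ('a \<Rightarrow> 'b::topological_space) \<Rightarrow> 'b \<Rightarrow> bool" where
  "net_tendsto A r x l \<longleftrightarrow>
     (\<forall>U. open U \<and> l \<in> U \<longrightarrow> (\<exists>a0\<in>A. \<forall>a\<in>A. (a0, a) \<in> r \<longrightarrow> x a \<in> U))"

definition net_cluster :: "'a set \<Rightarrow> 'a rel \<Rightarrow> ('a \<Rightarrow> 'b::topological_space) \<Rightarrow> 'b \<Rightarrow> bool" where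
  "net_cluster A r x c \<longleftrightarrow>
     (\<forall>U. open U \<and> c \<in> U \<longrightarrow> (\<forall>a\<in>A. \<exists>b\<in>A. (a, b) \<in> r \<and> x b \<in> U))"

definition net_liminf :: "'a set \<Rightarrow> 'a rel \<Rightarrow> ('a \<Rightarrow> ereal) \<Rightarrow> ereal" where
  "net_liminf A r x = Inf {c. net_cluster A r x c}"

abbreviation L01 :: "real measure" where
  "L01 \<equiv> lebesgue_on {0..1}"

text \<open>The vector space (R^[0,1])^A, with elements represented canonically as
  functions that vanish outside A (in the index) and outside [0,1] (in the variable).\<close>
definition net_space :: "'a set \<Rightarrow> ('a \<Rightarrow> real \<Rightarrow> real) set" where
  "net_space A = {F. \<forall>a t. (a \<notin> A \<or> t \<notin> {0..1}) \<longrightarrow> F a t = 0}"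

definition net_comb :: "('a \<Rightarrow> real \<Rightarrow> real) set \<Rightarrow> (('a \<Rightarrow> real \<Rightarrow> real) \<Rightarrow> real)
    \<Rightarrow> 'a \<Rightarrow> real \<Rightarrow> real" where
  "net_comb C c = (\<lambda>a t. \<Sum>F\<in>C. c F * F a t)"

definition net_lin_indep :: "('a \<Rightarrow> real \<Rightarrow> real) set \<Rightarrow> bool" where
  "net_lin_indep B \<longleftrightarrow>
     (\<forall>C c. C \<subseteq> B \<and> finite C \<and> net_comb C c = (\<lambda>a t. 0) \<longrightarrow> (\<forall>F\<in>C. c F = 0))"

text \<open>Positively kappa-coneable, kappa given as the cardinality of a set K.\<close>
definition pos_coneable :: "('a \<Rightarrow> real \<Rightarrow> real) set \<Rightarrow> 'k set \<Rightarrow> bool" where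
  "pos_coneable S K \<longleftrightarrow>
     (\<exists>B. B \<subseteq> S \<and> net_lin_indep B \<and> (card_of B, card_of K) \<in> ordIso \<and>
        (\<forall>C c. C \<subseteq> B \<and> finite C \<and> C \<noteq> {} \<and> (\<forall>F\<in>C. c F > 0) \<longrightarrow> net_comb C c \<in> S))"

definition null_cover :: "real set set \<Rightarrow> bool" where
  "null_cover \<F> \<longleftrightarrow> (\<forall>N\<in>\<F>. N \<subseteq> {0..1} \<and> N \<in> null_sets lebesgue) \<and> {0..1} \<subseteq> \<Union>\<F>"

definition card_is_covN :: "'a set \<Rightarrow> bool" where
  "card_is_covN A \<longleftrightarrow> (\<exists>\<F>. null_cover \<F> \<and> (card_of \<F>, card_of A) \<in> ordIso) \<and> (\<forall>\<F>. null_cover \<F> \<longrightarrow> (card_of A, card_of \<F>) \<in> ordLeq)"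

definition measurable_net :: "'a set \<Rightarrow> ('a \<Rightarrow> real \<Rightarrow> real) \<Rightarrow> bool" where
  "measurable_net A F \<longleftrightarrow> (\<forall>a\<in>A. F a \<in> borel_measurable L01)"

definition NM :: "'a set \<Rightarrow> 'a rel \<Rightarrow> ('a \<Rightarrow> real \<Rightarrow> real) set" where
  "NM A r = {F \<in> net_space A. measurable_net A F \<and>
     (\<forall>a\<in>A. \<forall>b\<in>A. (a, b) \<in> r \<longrightarrow> (AE t in L01. 0 \<le> F a t \<and> F a t \<le> F b t)) \<and>
     (\<exists>f. integrable L01 f \<and> (AE t in L01. net_tendsto A r (\<lambda>a. F a t) (f t)) \<and>
        \<not> net_tendsto A r (\<lambda>a. \<integral>\<^sup>+ t. ennreal (F a t) \<partial>L01) (\<integral>\<^sup>+ t. ennreal (f t) \<partial>L01))}"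

definition NF :: "'a set \<Rightarrow> 'a rel \<Rightarrow> ('a \<Rightarrow> real \<Rightarrow> real) set" where
  "NF A r = {F \<in> net_space A. measurable_net A F \<and>
     (\<forall>a\<in>A. AE t in L01. 0 \<le> F a t) \<and>
     (let g = (\<lambda>t. net_liminf A r (\<lambda>a. ereal (F a t))) in
        (AE t in L01. \<bar>g t\<bar> \<noteq> \<infinity>) \<and> integrable L01 (\<lambda>t. real_of_ereal (g t)) \<and>
        ereal (\<integral>t. real_of_ereal (g t) \<partial>L01) >
          net_liminf A r (\<lambda>a. enn2ereal (\<integral>\<^sup>+ t. ennreal (F a t) \<partial>L01)))}"

definition ND :: "'a set \<Rightarrow> 'a rel \<Rightarrow> ('a \<Rightarrow> real \<Rightarrow> real) set" where
  "ND A r = {F \<in> net_space A. measurable_net A F \<and>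
     (\<exists>g. integrable L01 g \<and> (\<forall>a\<in>A. AE t in L01. \<bar>F a t\<bar> \<le> g t)) \<and>
     (\<exists>f. integrable L01 f \<and> (AE t in L01. net_tendsto A r (\<lambda>a. F a t) (f t)) \<and>
        \<not> net_tendsto A r (\<lambda>a. \<integral>t. \<bar>F a t - f t\<bar> \<partial>L01) 0)}"

end

theory Submission
  imports Defs "HOL-Algebra.Free_Abelian_Groups"
begin

text \<open>Take a cover \<open>\<F>\<close> of [0,1] by null sets of the least possible cardinality cov(N); it is
  infinite. Its finite subfamilies, ordered by inclusion, form a directed set of cardinality
  cov(N) which is not linearly ordered. Along it, the net \<open>a \<mapsto> indicator (\<Union>a)\<close> vanishes a.e.
  for every \<open>a\<close>, so all its integrals are 0, yet it converges to 1 at every point of [0,1]: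
  a point lies in some member of \<open>\<F>\<close>, hence eventually in \<open>\<Union>a\<close>. One such net defeats the
  monotone convergence theorem, Fatou's lemma and dominated convergence at once.

  To get 2^c linearly independent nets of this kind, replace the value 1 at the singleton
  subfamilies \<open>{N}\<close> by \<open>1 + w Y\<close>, where \<open>w Y\<close> (\<open>Y \<subseteq> \<real>\<close>) is Hausdorff's independent family of
  0-1 functions on [0,1]. Singletons are eventually left behind, so the perturbation changes
  neither limits nor integrals, and every positive combination is again a net of this kind.\<close>

unbundle cardinal_syntax

lemma net_tendsto_eventually_const:
  assumes "a0 \<in> A" "\<And>a. a \<in> A \<Longrightarrow> (a0, a) \<in> r \<Longrightarrow> x a = s"
  shows "net_tendsto A r x s"
  using assms unfolding net_tendsto_def by metis

lemma not_net_tendsto_const: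
  fixes s l :: "'b::t1_space"
  assumes "directed_set A r" "\<And>a. a \<in> A \<Longrightarrow> x a = s" "s \<noteq> l"
  shows "\<not> net_tendsto A r x l"
proof
  assume "net_tendsto A r x l"
  moreover obtain U where "open U" "l \<in> U" "s \<notin> U"
    using t1_space assms(3) by metis
  ultimately obtain a0 where "a0 \<in> A" "\<forall>a\<in>A. (a0, a) \<in> r \<longrightarrow> x a \<in> U"
    unfolding net_tendsto_def by blast
  then show False
    using assms(1,2) \<open>s \<notin> U\<close> unfolding directed_set_def refl_on_def by blast
qed

lemma net_liminf_eventually_const:
  assumes D: "directed_set A r" and "a0 \<in> A"
    and ev: "\<And>a. a \<in> A \<Longrightarrow> (a0, a) \<in> r \<Longrightarrow> x a = s"
  shows "net_liminf A r x = s"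
proof -
  have "net_cluster A r x c \<longleftrightarrow> c = s" for c
  proof
    assume c: "net_cluster A r x c"
    show "c = s"
    proof (rule ccontr)
      assume "c \<noteq> s"
      then obtain U where "open U" "c \<in> U" "s \<notin> U" using t1_space by metis
      then show False
        using c \<open>a0 \<in> A\<close> ev unfolding net_cluster_def by blast
    qed
  next
    assume "c = s"
    show "net_cluster A r x c"
      unfolding net_cluster_def
    proof safe
      fix U a assume "open U" "c \<in> U" "a \<in> A"
      then obtain b where "b \<in> A" "(a, b) \<in> r" "(a0, b) \<in> r"
        using D \<open>a0 \<in> A\<close> unfolding directed_set_def by blast
      then show "\<exists>b\<in>A. (a, b) \<in> r \<and> x b \<in> U" using ev \<open>c = s\<close> \<open>c \<in> U\<close> by auto
    qed
  qed
  then have "{c. net_cluster A r x c} = {s}" by blast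
  then show ?thesis unfolding net_liminf_def by simp
qed

lemma AE_lebesgue_on_if_AE_lebesgue:
  assumes "S \<in> sets lebesgue" "AE t in lebesgue. P t"
  shows "AE t in lebesgue_on S. P t"
  using assms by (subst AE_restrict_space_iff) auto

lemma borel_measurable_lebesgue_on_if_AE_zero:
  fixes g :: "'a::euclidean_space \<Rightarrow> 'b::euclidean_space"
  assumes "AE t in lebesgue. g t = 0"
  shows "g \<in> borel_measurable (lebesgue_on S)"
proof -
  have "AE t in lebesgue. 0 = g t" using assms by eventually_elim simp
  then have "g \<in> borel_measurable lebesgue" by (rule borel_measurable_AE[rotated]) simp
  then show ?thesis by (rule measurable_restrict_space1)
qed

lemma emeasure_L01 [simp]: "emeasure L01 {0..1} = 1"
  by (simp add: emeasure_restrict_space)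

lemma measure_L01 [simp]: "measure L01 {0..1} = 1"
  by (simp add: measure_restrict_space)

lemma integrable_L01_const [simp]: "integrable L01 (\<lambda>t. c::real)"
  using finite_measure.integrable_const finite_measure_lebesgue_on by blast

definition null_net :: "'a set \<Rightarrow> 'a rel \<Rightarrow> ('a \<Rightarrow> real \<Rightarrow> real) \<Rightarrow> real \<Rightarrow> bool" where
  "null_net A r G s \<longleftrightarrow> G \<in> net_space A \<and> (\<forall>a. AE t in lebesgue. G a t = 0) \<and>
     (\<forall>t\<in>{0..1}. \<exists>a0\<in>A. \<forall>a\<in>A. (a0, a) \<in> r \<longrightarrow> G a t = s)"

context
  fixes A :: "'a set" and r G s
  assumes G: "null_net A r G s"
begin

lemma null_net_borel_measurable: "G a \<in> borel_measurable L01"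
  using G borel_measurable_lebesgue_on_if_AE_zero unfolding null_net_def by blast

lemma null_net_measurable: "measurable_net A G"
  by (simp add: measurable_net_def null_net_borel_measurable)

lemma null_net_AE_zero: "AE t in L01. G a t = 0"
  using G unfolding null_net_def by (intro AE_lebesgue_on_if_AE_lebesgue) auto

lemma null_net_nn_integral: "(\<integral>\<^sup>+t. ennreal (G a t) \<partial>L01) = 0"
proof -
  have "(\<integral>\<^sup>+t. ennreal (G a t) \<partial>L01) = (\<integral>\<^sup>+t. 0 \<partial>L01)"
    using null_net_AE_zero[of a] by (intro nn_integral_cong_AE) auto
  then show ?thesis by simp
qed

lemma null_net_eventually:
  assumes "t \<in> {0..1}"
  obtains a0 where "a0 \<in> A" "\<And>a. a \<in> A \<Longrightarrow> (a0, a) \<in> r \<Longrightarrow> G a t = s"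
  using G assms unfolding null_net_def by blast

lemma null_net_tendsto: "AE t in L01. net_tendsto A r (\<lambda>a. G a t) s"
proof (rule AE_I2)
  fix t assume "t \<in> space L01"
  then show "net_tendsto A r (\<lambda>a. G a t) s"
    by (metis null_net_eventually net_tendsto_eventually_const space_lebesgue_on)
qed

context
  assumes D: "directed_set A r"
begin

lemma null_net_liminf: "t \<in> {0..1} \<Longrightarrow> net_liminf A r (\<lambda>a. ereal (G a t)) = s"
  by (metis null_net_eventually net_liminf_eventually_const[OF D])

lemma null_net_in_NM:
  assumes "s > 0"
  shows "G \<in> NM A r"
  unfolding NM_def
proof (intro CollectI conjI ballI impI exI[of _ "\<lambda>t. s"])
  show "G \<in> net_space A" using G unfolding null_net_def by blast
  show "measurable_net A G" by (rule null_net_measurable)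
  fix a b show "AE t in L01. 0 \<le> G a t \<and> G a t \<le> G b t"
    using null_net_AE_zero[of a] null_net_AE_zero[of b] by eventually_elim simp
next
  show "\<not> net_tendsto A r (\<lambda>a. \<integral>\<^sup>+ t. ennreal (G a t) \<partial>L01) (\<integral>\<^sup>+ t. ennreal s \<partial>L01)"
    using assms by (intro not_net_tendsto_const[OF D]) (auto simp: null_net_nn_integral)
qed (simp_all add: null_net_tendsto)

lemma null_net_in_NF:
  assumes "s > 0"
  shows "G \<in> NF A r"
proof -
  obtain a0 where "a0 \<in> A" using D unfolding directed_set_def by blast
  then have liminf_integrals: "net_liminf A r (\<lambda>a. enn2ereal (\<integral>\<^sup>+ t. ennreal (G a t) \<partial>L01)) = 0"
    by (intro net_liminf_eventually_const[OF D])
      (simp_all add: null_net_nn_integral zero_ennreal.rep_eq)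
  let ?g = "\<lambda>t. real_of_ereal (net_liminf A r (\<lambda>a. ereal (G a t)))"
  have integrable_g: "integrable L01 ?g \<longleftrightarrow> integrable L01 (\<lambda>t. s)"
    by (rule Bochner_Integration.integrable_cong) (simp_all add: null_net_liminf)
  have integral_g: "(\<integral>t. ?g t \<partial>L01) = (\<integral>t. s \<partial>L01)"
    by (rule Bochner_Integration.integral_cong) (simp_all add: null_net_liminf)
  show ?thesis
    unfolding NF_def Let_def
  proof (intro CollectI conjI)
    show "G \<in> net_space A" using G unfolding null_net_def by blast
    show "measurable_net A G" by (rule null_net_measurable)
    show "\<forall>a\<in>A. AE t in L01. 0 \<le> G a t"
    proof
      fix a show "AE t in L01. 0 \<le> G a t" using null_net_AE_zero[of a] by eventually_elim simp
    qed
    show "AE t in L01. \<bar>net_liminf A r (\<lambda>a. ereal (G a t))\<bar> \<noteq> \<infinity>"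
      by (rule AE_I2) (simp add: null_net_liminf)
    show "integrable L01 ?g" using integrable_g by simp
    show "net_liminf A r (\<lambda>a. enn2ereal (\<integral>\<^sup>+ t. ennreal (G a t) \<partial>L01)) < ereal (\<integral>t. ?g t \<partial>L01)"
      using integral_g assms liminf_integrals by simp
  qed
qed

lemma null_net_in_ND:
  assumes "s \<noteq> 0"
  shows "G \<in> ND A r"
proof -
  have "(\<integral>t. \<bar>G a t - s\<bar> \<partial>L01) = \<bar>s\<bar>" for a
  proof -
    have "(\<lambda>t. \<bar>G a t - s\<bar>) \<in> borel_measurable L01"
      using null_net_borel_measurable by measurable
    then have "(\<integral>t. \<bar>G a t - s\<bar> \<partial>L01) = (\<integral>t. \<bar>s\<bar> \<partial>L01)"
      using null_net_AE_zero[of a] by (intro integral_cong_AE) auto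
    then show ?thesis by simp
  qed
  then have "\<not> net_tendsto A r (\<lambda>a. \<integral>t. \<bar>G a t - s\<bar> \<partial>L01) 0"
    using assms by (intro not_net_tendsto_const[OF D, of _ "\<bar>s\<bar>"]) auto
  moreover have "\<forall>a\<in>A. AE t in L01. \<bar>G a t\<bar> \<le> 0"
    using null_net_AE_zero by (auto elim!: eventually_mono)
  ultimately show ?thesis
    using G null_net_measurable null_net_tendsto unfolding ND_def null_net_def
    by (intro CollectI conjI exI[of _ "\<lambda>t. 0"] exI[of _ "\<lambda>t. s"]) auto
qed

end

end

definition lin_indep_family :: "('k \<Rightarrow> 'a \<Rightarrow> real \<Rightarrow> real) \<Rightarrow> bool" where
  "lin_indep_family Fn \<longleftrightarrow>
     (\<forall>\<Y> c. finite \<Y> \<and> (\<forall>a t. (\<Sum>Y\<in>\<Y>. c Y * Fn Y a t) = 0) \<longrightarrow> (\<forall>Y\<in>\<Y>. c Y = 0))"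

lemma lin_indep_familyD:
  "lin_indep_family Fn \<Longrightarrow> finite \<Y> \<Longrightarrow> \<forall>a t. (\<Sum>Y\<in>\<Y>. c Y * Fn Y a t) = 0 \<Longrightarrow> Y \<in> \<Y> \<Longrightarrow> c Y = 0"
  unfolding lin_indep_family_def by blast

lemma inj_if_lin_indep_family:
  assumes indep: "lin_indep_family Fn"
  shows "inj Fn"
proof (rule injI, rule ccontr)
  fix Y1 Y2 assume "Fn Y1 = Fn Y2" "Y1 \<noteq> Y2"
  define c where "c Y = (if Y = Y1 then 1 else - 1 :: real)" for Y
  have "\<forall>a t. (\<Sum>Y\<in>{Y1, Y2}. c Y * Fn Y a t) = 0"
    using \<open>Fn Y1 = Fn Y2\<close> \<open>Y1 \<noteq> Y2\<close> by (simp add: c_def)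
  then have "c Y1 = 0" using lin_indep_familyD[OF indep, of "{Y1, Y2}" c Y1] by simp
  then show False by (simp add: c_def)
qed

lemma net_lin_indep_range:
  assumes indep: "lin_indep_family Fn"
  shows "net_lin_indep (range Fn)"
  unfolding net_lin_indep_def
proof (intro allI impI)
  fix C c assume "C \<subseteq> range Fn \<and> finite C \<and> net_comb C c = (\<lambda>a t. 0)"
  then have C: "C \<subseteq> range Fn" "finite C" and zero: "\<forall>a t. (\<Sum>F\<in>C. c F * F a t) = 0"
    by (auto simp: net_comb_def fun_eq_iff)
  have inj: "inj Fn" using indep by (rule inj_if_lin_indep_family)
  have C_eq: "Fn ` (Fn -` C) = C" using C(1) by (simp add: Int_absorb2)
  have "(\<Sum>F\<in>C. c F * F a t) = (\<Sum>Y\<in>Fn -` C. (c \<circ> Fn) Y * Fn Y a t)" for a t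
    using sum.reindex[OF inj_on_subset[OF inj subset_UNIV[of "Fn -` C"]], of "\<lambda>F. c F * F a t"]
    unfolding C_eq by simp
  then have "\<forall>a t. (\<Sum>Y\<in>Fn -` C. (c \<circ> Fn) Y * Fn Y a t) = 0" using zero by simp
  then have "\<forall>Y\<in>Fn -` C. (c \<circ> Fn) Y = 0"
    using lin_indep_familyD[OF indep finite_vimageI[OF C(2) inj]] by blast
  then show "\<forall>F\<in>C. c F = 0" using C(1) by auto
qed

lemma pos_coneable_if_lin_indep_family:
  fixes Fn :: "'k set \<Rightarrow> 'a \<Rightarrow> real \<Rightarrow> real"
  assumes indep: "lin_indep_family Fn"
    and cone: "\<And>C (c :: ('a \<Rightarrow> real \<Rightarrow> real) \<Rightarrow> real).
      C \<subseteq> range Fn \<Longrightarrow> finite C \<Longrightarrow> C \<noteq> {} \<Longrightarrow> \<forall>F\<in>C. c F > 0 \<Longrightarrow> net_comb C c \<in> S"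
  shows "pos_coneable S (Pow (UNIV :: 'k set))"
  unfolding pos_coneable_def
proof (intro exI[of _ "range Fn"] conjI allI impI)
  show "range Fn \<subseteq> S"
  proof
    fix F assume "F \<in> range Fn"
    then have "net_comb {F} (\<lambda>_. 1) \<in> S" by (intro cone) auto
    then show "F \<in> S" by (simp add: net_comb_def)
  qed
  show "net_lin_indep (range Fn)" using indep by (rule net_lin_indep_range)
  have "bij_betw Fn UNIV (range Fn)"
    using inj_if_lin_indep_family[OF indep] by (simp add: bij_betw_def)
  then have "( |UNIV :: 'k set set|, |range Fn| ) \<in> ordIso" using card_of_ordIso by blast
  then show "( |range Fn|, |Pow (UNIV :: 'k set)| ) \<in> ordIso" using ordIso_symmetric by simp
  fix C and c :: "('a \<Rightarrow> real \<Rightarrow> real) \<Rightarrow> real"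
  assume "C \<subseteq> range Fn \<and> finite C \<and> C \<noteq> {} \<and> (\<forall>F\<in>C. 0 < c F)"
  then show "net_comb C c \<in> S" by (intro cone) auto
qed

lemma finite_family_separating_set:
  fixes \<Y> :: "'a set set"
  assumes "finite \<Y>"
  obtains D where "finite D" "\<And>Y. Y \<in> \<Y> \<Longrightarrow> Y \<inter> D = X \<inter> D \<Longrightarrow> Y = X"
proof -
  have "\<forall>Y\<in>\<Y> - {X}. \<exists>x. x \<in> (Y - X) \<union> (X - Y)" by (auto simp: set_eq_iff)
  then obtain p where p: "\<forall>Y\<in>\<Y> - {X}. p Y \<in> (Y - X) \<union> (X - Y)"
    by metis
  show ?thesis
  proof
    show "finite (p ` (\<Y> - {X}))" using assms by simp
    fix Y assume Y: "Y \<in> \<Y>" "Y \<inter> p ` (\<Y> - {X}) = X \<inter> p ` (\<Y> - {X})"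
    show "Y = X"
    proof (rule ccontr)
      assume "Y \<noteq> X"
      then have "p Y \<in> p ` (\<Y> - {X})" and sym_diff: "p Y \<in> (Y - X) \<union> (X - Y)"
        using Y(1) p by auto
      then have "p Y \<in> Y \<longleftrightarrow> p Y \<in> X" using Y(2) by (metis Int_iff)
      then show False using sym_diff by simp
    qed
  qed
qed

lemma finite_pairs_ordLeq_unit_interval:
  "|Fpow (UNIV :: real set) \<times> Fpow (UNIV :: real set)| \<le>o |{0..1::real}|"
proof -
  have Fpow: "( |Fpow (UNIV :: real set)|, |UNIV :: real set| ) \<in> ordIso"
    by (rule card_of_Fpow_infinite) (rule infinite_UNIV_char_0)
  then have "infinite (Fpow (UNIV :: real set))"
    using card_of_ordIso_finite[OF Fpow] infinite_UNIV_char_0 by simp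
  then have times:
    "( |Fpow (UNIV :: real set) \<times> Fpow (UNIV :: real set)|, |Fpow (UNIV :: real set)| ) \<in> ordIso"
    by (rule card_of_Times_same_infinite)
  have "(UNIV :: real set) \<approx> {0..1::real}"
    using closed_interval_eqpoll_reals[of 0 1] eqpoll_sym by simp
  then have interval: "( |UNIV :: real set|, |{0..1::real}| ) \<in> ordIso"
    by (simp add: eqpoll_iff_card_of_ordIso)
  show ?thesis
    using ordIso_transitive[OF ordIso_transitive[OF times Fpow] interval] by (rule ordIso_imp_ordLeq)
qed

definition pair_code :: "real set \<times> real set \<Rightarrow> real" where
  "pair_code = (SOME f. inj_on f (Fpow UNIV \<times> Fpow UNIV) \<and> f ` (Fpow UNIV \<times> Fpow UNIV) \<subseteq> {0..1})"

lemma pair_code: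
  "inj_on pair_code (Fpow UNIV \<times> Fpow UNIV)" "pair_code ` (Fpow UNIV \<times> Fpow UNIV) \<subseteq> {0..1}"
proof -
  have "\<exists>f. inj_on f (Fpow (UNIV :: real set) \<times> Fpow (UNIV :: real set)) \<and>
      f ` (Fpow UNIV \<times> Fpow UNIV) \<subseteq> {0..1::real}"
    using finite_pairs_ordLeq_unit_interval by (simp only: card_of_ordLeq[symmetric])
  from someI_ex[OF this] show
    "inj_on pair_code (Fpow UNIV \<times> Fpow UNIV)" "pair_code ` (Fpow UNIV \<times> Fpow UNIV) \<subseteq> {0..1}"
    unfolding pair_code_def by simp_all
qed

text \<open>Hausdorff's independent family of subsets of [0,1], indexed by the subsets of \<open>\<real>\<close>.\<close>

definition trace_indicator :: "real set \<Rightarrow> real \<Rightarrow> real" where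
  "trace_indicator Y t = (if \<exists>D. finite D \<and> t = pair_code (D, Y \<inter> D) then 1 else 0)"

lemma trace_indicator_pair_code:
  assumes "finite D" "finite E"
  shows "trace_indicator Y (pair_code (D, E)) = (if Y \<inter> D = E then 1 else 0)"
proof -
  have "(\<exists>D'. finite D' \<and> pair_code (D, E) = pair_code (D', Y \<inter> D')) \<longleftrightarrow> Y \<inter> D = E"
  proof
    assume "\<exists>D'. finite D' \<and> pair_code (D, E) = pair_code (D', Y \<inter> D')"
    then obtain D' where "finite D'" and eq: "pair_code (D, E) = pair_code (D', Y \<inter> D')" by blast
    then have "(D, E) = (D', Y \<inter> D')"
      by (intro inj_onD[OF pair_code(1) eq]) (simp_all add: assms Fpow_def)
    then show "Y \<inter> D = E" by simp
  qed (use assms in blast)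
  then show ?thesis by (simp add: trace_indicator_def)
qed

lemma trace_indicator_independent:
  assumes "finite \<Y>" and zero: "\<forall>t\<in>{0..1}. (\<Sum>Y\<in>\<Y>. c Y * trace_indicator Y t) = 0"
  shows "\<forall>Y\<in>\<Y>. c Y = 0"
proof
  fix Y0 assume "Y0 \<in> \<Y>"
  obtain D where D: "finite D" and separates: "\<And>Y. Y \<in> \<Y> \<Longrightarrow> Y \<inter> D = Y0 \<inter> D \<Longrightarrow> Y = Y0"
    using finite_family_separating_set[OF \<open>finite \<Y>\<close>, where X = Y0] by metis
  let ?t = "pair_code (D, Y0 \<inter> D)"
  have "(D, Y0 \<inter> D) \<in> Fpow UNIV \<times> Fpow UNIV" using D by (simp add: Fpow_def)
  then have "?t \<in> {0..1}" using pair_code(2) by blast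
  have "c Y * trace_indicator Y ?t = (if Y = Y0 then c Y else 0)" if "Y \<in> \<Y>" for Y
  proof (cases "Y = Y0")
    case False
    then have "Y \<inter> D \<noteq> Y0 \<inter> D" using separates \<open>Y \<in> \<Y>\<close> by blast
    then show ?thesis using False D by (simp add: trace_indicator_pair_code)
  qed (simp add: trace_indicator_pair_code D)
  then have "(\<Sum>Y\<in>\<Y>. c Y * trace_indicator Y ?t) = (\<Sum>Y\<in>\<Y>. if Y = Y0 then c Y else 0)"
    by (rule sum.cong[OF refl])
  also have "\<dots> = c Y0" using \<open>finite \<Y>\<close> \<open>Y0 \<in> \<Y>\<close> by simp
  finally show "c Y0 = 0" using zero \<open>?t \<in> {0..1}\<close> by simp
qed

lemma singletons_null_cover: "null_cover ((\<lambda>x. {x}) ` {0..1::real})"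
  unfolding null_cover_def by auto

lemma ex_minimal_null_cover: "\<exists>\<F>. null_cover \<F> \<and> (\<forall>\<G>. null_cover \<G> \<longrightarrow> |\<F>| \<le>o |\<G>| )"
proof -
  have "\<exists>r\<in>card_of ` Collect null_cover. \<forall>r'\<in>card_of ` Collect null_cover. r \<le>o r'"
    using singletons_null_cover by (intro exists_minim_Card_order) auto
  then show ?thesis by blast
qed

lemma null_cover_infinite:
  assumes "null_cover \<F>"
  shows "infinite \<F>"
proof
  assume "finite \<F>"
  moreover have "\<F> \<subseteq> null_sets lebesgue" using assms unfolding null_cover_def by blast
  ultimately have null: "\<Union>\<F> \<in> null_sets lebesgue" by (rule null_sets.finite_Union)
  have "{0..1::real} \<subseteq> \<Union>\<F>" using assms unfolding null_cover_def by blast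
  then have "{0..1::real} \<in> null_sets lebesgue" by (rule null_sets_subset[OF null, rotated]) simp
  then have "emeasure lebesgue {0..1::real} = 0" by (rule null_setsD1)
  then show False by simp
qed

lemma Fpow_minimal_null_cover_ordLeq_reals:
  assumes "null_cover \<F>" "\<forall>\<G>. null_cover \<G> \<longrightarrow> |\<F>| \<le>o |\<G>|"
  shows "|Fpow \<F>| \<le>o |UNIV :: real set|"
proof -
  have "( |Fpow \<F>|, |\<F>| ) \<in> ordIso"
    using card_of_Fpow_infinite[OF null_cover_infinite[OF assms(1)]] .
  moreover have "|\<F>| \<le>o |(\<lambda>x. {x}) ` {0..1::real}|"
    using assms(2) singletons_null_cover by blast
  moreover have "|(\<lambda>x. {x}) ` {0..1::real}| \<le>o |UNIV :: real set|"
    using ordLeq_transitive[OF card_of_image card_of_UNIV] .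
  ultimately show ?thesis using ordIso_ordLeq_trans ordLeq_transitive by blast
qed

text \<open>The theorem asks for a directed set of reals, so the finite subfamilies of \<open>\<F>\<close> are
  transported into \<open>\<real>\<close> along the injection \<open>code\<close>.\<close>

locale finite_subfamilies_of_cover =
  fixes \<F> :: "real set set" and code :: "real set set \<Rightarrow> real"
  assumes null_cover: "null_cover \<F>" and inj_code: "inj_on code (Fpow \<F>)"
begin

definition index :: "real set" where
  "index = code ` Fpow \<F>"

definition subfamily :: "real \<Rightarrow> real set set" where
  "subfamily = inv_into (Fpow \<F>) code"

definition refines :: "real rel" where
  "refines = {(a, b). a \<in> index \<and> b \<in> index \<and> subfamily a \<subseteq> subfamily b}"

lemma code_in_index [simp]: "S \<in> Fpow \<F> \<Longrightarrow> code S \<in> index"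
  by (simp add: index_def)

lemma subfamily_code [simp]: "S \<in> Fpow \<F> \<Longrightarrow> subfamily (code S) = S"
  by (simp add: subfamily_def inj_code)

lemma subfamily_in_Fpow: "a \<in> index \<Longrightarrow> subfamily a \<in> Fpow \<F>"
  by (auto simp: index_def subfamily_def inv_into_into)

lemma Union_subfamily:
  assumes "a \<in> index"
  shows "\<Union>(subfamily a) \<in> null_sets lebesgue" "\<Union>(subfamily a) \<subseteq> {0..1}"
proof -
  have sub: "subfamily a \<subseteq> \<F>" and fin: "finite (subfamily a)"
    using subfamily_in_Fpow[OF assms] by (auto simp: Fpow_def)
  have null: "\<F> \<subseteq> null_sets lebesgue" and cover: "\<Union>\<F> \<subseteq> {0..1}"
    using null_cover unfolding null_cover_def by auto
  show "\<Union>(subfamily a) \<in> null_sets lebesgue"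
    using null_sets.finite_Union[OF fin order_trans[OF sub null]] .
  show "\<Union>(subfamily a) \<subseteq> {0..1}"
    using order_trans[OF Union_mono[OF sub] cover] .
qed

lemma member_containing_and_another:
  assumes "t \<in> {0..1}"
  obtains N N' where "N \<in> \<F>" "N' \<in> \<F>" "N \<noteq> N'" "t \<in> N"
proof -
  obtain N where N: "N \<in> \<F>" "t \<in> N" using null_cover assms unfolding null_cover_def by blast
  have "infinite (\<F> - {N})" using null_cover_infinite[OF null_cover] by simp
  then have "\<F> - {N} \<noteq> {}" by (metis finite.emptyI)
  then obtain N' where "N' \<in> \<F>" "N' \<noteq> N" by blast
  with N show thesis using that by blast
qed

lemma directed_set_index: "directed_set index refines"
  unfolding directed_set_def
proof (intro conjI ballI)
  have "{} \<in> Fpow \<F>" by (simp add: Fpow_def)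
  then show "index \<noteq> {}" using code_in_index by blast
  show "refines \<subseteq> index \<times> index" "refl_on index refines" "trans refines"
    by (auto simp: refines_def refl_on_def trans_def)
next
  fix a b assume ab: "a \<in> index" "b \<in> index"
  then have S: "subfamily a \<union> subfamily b \<in> Fpow \<F>"
    using subfamily_in_Fpow by (auto simp: Fpow_def)
  show "\<exists>c\<in>index. (a, c) \<in> refines \<and> (b, c) \<in> refines"
  proof
    show "code (subfamily a \<union> subfamily b) \<in> index" using S by simp
    then show "(a, code (subfamily a \<union> subfamily b)) \<in> refines \<and>
        (b, code (subfamily a \<union> subfamily b)) \<in> refines"
      using ab S by (simp add: refines_def)
  qed
qed

lemma not_card_order_refines: "\<not> card_order_on index refines"
proof
  assume "card_order_on index refines"
  then have total: "total_on index refines"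
    unfolding card_order_on_def well_order_on_def linear_order_on_def by blast
  obtain N1 N2 where N: "N1 \<in> \<F>" "N2 \<in> \<F>" "N1 \<noteq> N2"
    by (rule member_containing_and_another[of 0]) auto
  then have F: "{N1} \<in> Fpow \<F>" "{N2} \<in> Fpow \<F>" by (auto simp: Fpow_def)
  then have "code {N1} \<noteq> code {N2}" using N(3) by (metis subfamily_code singleton_inject)
  then have "(code {N1}, code {N2}) \<in> refines \<or> (code {N2}, code {N1}) \<in> refines"
    using total F unfolding total_on_def by simp
  then show False using F N(3) by (auto simp: refines_def)
qed

lemma card_is_covN_index:
  assumes minimal: "\<forall>\<G>. null_cover \<G> \<longrightarrow> |\<F>| \<le>o |\<G>|"
  shows "card_is_covN index"
proof -
  have "bij_betw code (Fpow \<F>) index" unfolding index_def using inj_code by (rule inj_on_imp_bij_betw)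
  then have "( |Fpow \<F>|, |index| ) \<in> ordIso" using card_of_ordIso by blast
  moreover have "( |Fpow \<F>|, |\<F>| ) \<in> ordIso"
    using card_of_Fpow_infinite[OF null_cover_infinite[OF null_cover]] .
  ultimately have iso: "( |\<F>|, |index| ) \<in> ordIso"
    using ordIso_symmetric ordIso_transitive by blast
  have "|index| \<le>o |\<G>|" if "null_cover \<G>" for \<G>
    using ordIso_ordLeq_trans[OF ordIso_symmetric[OF iso]] minimal that by blast
  then show ?thesis unfolding card_is_covN_def using null_cover iso by blast
qed

definition perturbed_net :: "real set \<Rightarrow> real \<Rightarrow> real \<Rightarrow> real" where
  "perturbed_net Y a t = (if a \<in> index \<and> t \<in> \<Union>(subfamily a)
     then 1 + (if card (subfamily a) = 1 then trace_indicator Y t else 0) else 0)"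

lemma perturbed_net_eventually_one:
  assumes "t \<in> {0..1}"
  obtains a0 where "a0 \<in> index"
    "\<And>a Y. a \<in> index \<Longrightarrow> (a0, a) \<in> refines \<Longrightarrow> perturbed_net Y a t = 1"
proof -
  obtain N N' where N: "N \<in> \<F>" "N' \<in> \<F>" "N \<noteq> N'" "t \<in> N"
    using member_containing_and_another[OF assms] .
  then have F: "{N, N'} \<in> Fpow \<F>" by (auto simp: Fpow_def)
  have "perturbed_net Y a t = 1" if a: "a \<in> index" "(code {N, N'}, a) \<in> refines" for a Y
  proof -
    have sub: "{N, N'} \<subseteq> subfamily a" using a(2) F by (simp add: refines_def)
    moreover have "finite (subfamily a)" using subfamily_in_Fpow[OF a(1)] by (simp add: Fpow_def)
    ultimately have "card (subfamily a) \<ge> 2"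
      using card_mono[of "subfamily a" "{N, N'}"] N(3) by simp
    then show ?thesis using a(1) sub N(4) by (auto simp: perturbed_net_def)
  qed
  then show thesis using that code_in_index[OF F] by blast
qed

lemma perturbed_net_at_singleton:
  assumes "N \<in> \<F>" "t \<in> N"
  shows "perturbed_net Y (code {N}) t = 1 + trace_indicator Y t"
  using assms by (simp add: perturbed_net_def Fpow_def)

lemma lin_indep_family_perturbed_net: "lin_indep_family perturbed_net"
  unfolding lin_indep_family_def
proof (intro allI impI, elim conjE)
  fix \<Y> and c :: "real set \<Rightarrow> real"
  assume "finite \<Y>" and zero: "\<forall>a t. (\<Sum>Y\<in>\<Y>. c Y * perturbed_net Y a t) = 0"
  show "\<forall>Y\<in>\<Y>. c Y = 0"
  proof (rule trace_indicator_independent[OF \<open>finite \<Y>\<close>], intro ballI)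
    fix t :: real assume t: "t \<in> {0..1}"
    obtain a0 where "a0 \<in> index" "\<And>Y. perturbed_net Y a0 t = 1"
      by (rule perturbed_net_eventually_one[OF t]) (auto simp: refines_def)
    then have sum_c: "(\<Sum>Y\<in>\<Y>. c Y) = 0" using zero[rule_format, of a0 t] by simp
    obtain N where "N \<in> \<F>" "t \<in> N" using member_containing_and_another[OF t] by blast
    then have "0 = (\<Sum>Y\<in>\<Y>. c Y * (1 + trace_indicator Y t))"
      using zero[rule_format, of "code {N}" t] by (simp add: perturbed_net_at_singleton)
    also have "\<dots> = (\<Sum>Y\<in>\<Y>. c Y) + (\<Sum>Y\<in>\<Y>. c Y * trace_indicator Y t)"
      by (simp add: distrib_left sum.distrib)
    finally show "(\<Sum>Y\<in>\<Y>. c Y * trace_indicator Y t) = 0" using sum_c by simp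
  qed
qed

lemma net_comb_perturbed_eq_0:
  assumes "C \<subseteq> range perturbed_net" "a \<notin> index \<or> t \<notin> \<Union>(subfamily a)"
  shows "net_comb C c a t = 0"
  unfolding net_comb_def
proof (rule sum.neutral, rule ballI)
  fix F assume "F \<in> C"
  then obtain Y where "F = perturbed_net Y" using assms(1) by blast
  then have "F a t = 0" using assms(2) by (auto simp: perturbed_net_def)
  then show "c F * F a t = 0" by simp
qed

lemma null_net_comb_perturbed:
  assumes C: "C \<subseteq> range perturbed_net"
  shows "null_net index refines (net_comb C c) (\<Sum>F\<in>C. c F)"
  unfolding null_net_def
proof (intro conjI allI ballI)
  show "net_comb C c \<in> net_space index"
    unfolding net_space_def
  proof (intro CollectI allI impI)
    fix a t assume "a \<notin> index \<or> t \<notin> {0..1::real}"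
    then have "a \<notin> index \<or> t \<notin> \<Union>(subfamily a)" using Union_subfamily(2) by blast
    then show "net_comb C c a t = 0" by (rule net_comb_perturbed_eq_0[OF C])
  qed
next
  fix a
  show "AE t in lebesgue. net_comb C c a t = 0"
  proof (cases "a \<in> index")
    case True
    show ?thesis
      using AE_not_in[OF Union_subfamily(1)[OF True]]
      by eventually_elim (simp add: net_comb_perturbed_eq_0[OF C])
  qed (simp add: net_comb_perturbed_eq_0[OF C])
next
  fix t :: real assume "t \<in> {0..1}"
  then obtain a0 where a0: "a0 \<in> index"
    and one: "\<And>a Y. a \<in> index \<Longrightarrow> (a0, a) \<in> refines \<Longrightarrow> perturbed_net Y a t = 1"
    by (rule perturbed_net_eventually_one) blast
  have "net_comb C c a t = (\<Sum>F\<in>C. c F)" if "a \<in> index" "(a0, a) \<in> refines" for a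
    unfolding net_comb_def
  proof (rule sum.cong[OF refl])
    fix F assume "F \<in> C"
    then obtain Y where "F = perturbed_net Y" using C by blast
    then show "c F * F a t = c F" using one[OF that] by simp
  qed
  then show "\<exists>a0\<in>index. \<forall>a\<in>index. (a0, a) \<in> refines \<longrightarrow> net_comb C c a t = (\<Sum>F\<in>C. c F)"
    using a0 by blast
qed

lemma pos_coneable_if_contains_null_nets:
  assumes "\<And>G s. null_net index refines G s \<Longrightarrow> s > 0 \<Longrightarrow> G \<in> S"
  shows "pos_coneable S (Pow (UNIV :: real set))"
proof (rule pos_coneable_if_lin_indep_family[OF lin_indep_family_perturbed_net])
  fix C and c :: "(real \<Rightarrow> real \<Rightarrow> real) \<Rightarrow> real"
  assume C: "C \<subseteq> range perturbed_net" "finite C" "C \<noteq> {}" "\<forall>F\<in>C. c F > 0"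
  have "(\<Sum>F\<in>C. c F) > 0" using C(2-4) by (intro sum_pos) auto
  with null_net_comb_perturbed[OF C(1)] show "net_comb C c \<in> S" by (rule assms)
qed

end

theorem mainTheorem1:
  shows "\<exists>(A :: real set) (r :: real rel).
     directed_set A r \<and> \<not> card_order_on A r \<and> card_is_covN A \<and>
     pos_coneable (NM A r) (Pow (UNIV :: real set)) \<and>
     pos_coneable (NF A r) (Pow (UNIV :: real set)) \<and>
     pos_coneable (ND A r) (Pow (UNIV :: real set))"
proof -
  obtain \<F> where cover: "null_cover \<F>" and minimal: "\<forall>\<G>. null_cover \<G> \<longrightarrow> |\<F>| \<le>o |\<G>|"
    using ex_minimal_null_cover by blast
  obtain code :: "real set set \<Rightarrow> real" where "inj_on code (Fpow \<F>)"
    using Fpow_minimal_null_cover_ordLeq_reals[OF cover minimal] by (auto simp flip: card_of_ordLeq)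
  then interpret finite_subfamilies_of_cover \<F> code
    using cover by unfold_locales
  note D = directed_set_index
  have "pos_coneable (NM index refines) (Pow (UNIV :: real set))"
    by (rule pos_coneable_if_contains_null_nets) (rule null_net_in_NM[OF _ D])
  moreover have "pos_coneable (NF index refines) (Pow (UNIV :: real set))"
    by (rule pos_coneable_if_contains_null_nets) (rule null_net_in_NF[OF _ D])
  moreover have "pos_coneable (ND index refines) (Pow (UNIV :: real set))"
    by (rule pos_coneable_if_contains_null_nets, rule null_net_in_ND[OF _ D]) auto
  ultimately show ?thesis
    using D not_card_order_refines card_is_covN_index[OF minimal]
    by (intro exI[of _ index] exI[of _ refines] conjI)
qed

end
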